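(* Let $\mu$ be a probability distribution on $(E,\mathscr{E})$. Let $\xi:E\to E$ be a measurable involution with $\mu\circ\xi^{-1}=\mu$, so that $Qf=f\circ\xi$ defines an isometric involution of $L^{2}(\mu)$. Assume: (1) $\psi:E\to E$ is a measurable bijection with $\psi^{-1}=\xi\circ\psi\circ\xi$; (2) $\phi:\mathbb{R}_{+}\to[0,1]$ satisfies $r\phi(r^{-1})=\phi(r)$ for $r>0$ and $\phi(0)=0$; (3) with $\nu:=\mu+\mu^{\xi\circ\psi}$, define for $z\in E$, $r(z):=\frac{{\rm d}\mu^{\xi\circ\psi}/{\rm d}\nu(z)}{{\rm d}\mu/{\rm d}\nu(z)}$ if both ${\rm d}\mu^{\xi\circ\psi}/{\rm d}\nu(z)>0$ and ${\rm d}\mu/{\rm d}\nu(z)>0$, and $r(z):=0$ otherwise. Then the Markov kernel \[P(z,{\rm d}z'):=\phi\circ r(z)\,\delta_{\psi(z)}({\rm d}z')+\big[1-\phi\circ r(z)\big]\delta_{\xi(z)}({\rm d}z')\] is $(\mu,Q)$-reversible.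
   Context: For a measurable $\varphi:E\to E$, $\mu^{\varphi}(A):=\mu(\varphi^{-1}(A))$. $\langle f,g\rangle_{\mu}=\int fg\,{\rm d}\mu$. A Markov kernel $P$ is $(\mu,Q)$-reversible if $\langle Pf,g\rangle_{\mu}=\langle f,QPQg\rangle_{\mu}$ for all $f,g\in L^{2}(\mu)$. *)

theory Defs
  imports "HOL-Probability.Probability"
begin

definition add_measure :: "'a measure \<Rightarrow> 'a measure \<Rightarrow> 'a measure" where
  "add_measure M N = measure_of (space M) (sets M) (\<lambda>A. emeasure M A + emeasure N A)"

abbreviation pushfwd :: "'a measure \<Rightarrow> ('a \<Rightarrow> 'a) \<Rightarrow> 'a measure" where
  "pushfwd M f \<equiv> distr M M f"

definition kernel_op :: "('a \<Rightarrow> 'a measure) \<Rightarrow> ('a \<Rightarrow> real) \<Rightarrow> 'a \<Rightarrow> real" where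
  "kernel_op P f z = (\<integral>y. f y \<partial>(P z))"

definition L2 :: "'a measure \<Rightarrow> ('a \<Rightarrow> real) \<Rightarrow> bool" where
  "L2 M f \<longleftrightarrow> f \<in> borel_measurable M \<and> integrable M (\<lambda>x. (f x)\<^sup>2)"

definition inner_L2 :: "'a measure \<Rightarrow> ('a \<Rightarrow> real) \<Rightarrow> ('a \<Rightarrow> real) \<Rightarrow> real" where
  "inner_L2 M f g = (\<integral>x. f x * g x \<partial>M)"

definition reversible :: "'a measure \<Rightarrow> (('a \<Rightarrow> real) \<Rightarrow> ('a \<Rightarrow> real)) \<Rightarrow> ('a \<Rightarrow> 'a measure) \<Rightarrow> bool" where
  "reversible M Q P \<longleftrightarrow>
     (\<forall>f g. L2 M f \<longrightarrow> L2 M g \<longrightarrow>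
        inner_L2 M (kernel_op P f) g = inner_L2 M f (Q (kernel_op P (Q g))))"

definition ratio_r :: "'a measure \<Rightarrow> ('a \<Rightarrow> 'a) \<Rightarrow> ('a \<Rightarrow> 'a) \<Rightarrow> 'a \<Rightarrow> real" where
  "ratio_r M \<xi> \<psi> z =
     (let \<nu> = add_measure M (pushfwd M (\<xi> \<circ> \<psi>));
          a = enn2real (RN_deriv \<nu> (pushfwd M (\<xi> \<circ> \<psi>)) z);
          b = enn2real (RN_deriv \<nu> M z)
      in if RN_deriv \<nu> (pushfwd M (\<xi> \<circ> \<psi>)) z > 0 \<and> RN_deriv \<nu> M z > 0 then a / b else 0)"

definition mix_kernel :: "'a measure \<Rightarrow> (real \<Rightarrow> real) \<Rightarrow> ('a \<Rightarrow> 'a) \<Rightarrow> ('a \<Rightarrow> 'a) \<Rightarrow> 'a \<Rightarrow> 'a measure" where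
  "mix_kernel M \<phi> \<xi> \<psi> z =
     measure_of (space M) (sets M)
       (\<lambda>A. ennreal (\<phi> (ratio_r M \<xi> \<psi> z)) * indicator A (\<psi> z)
           + ennreal (1 - \<phi> (ratio_r M \<xi> \<psi> z)) * indicator A (\<xi> z))"

end

theory Submission
  imports Defs
begin

text \<open>The move \<open>T = \<xi> \<circ> \<psi>\<close> is an involution, so \<open>\<nu> = \<mu> + \<mu>\<^sup>T\<close> is \<open>T\<close>-invariant and \<open>T\<close>
  exchanges the densities \<open>d\<mu>/d\<nu>\<close> and \<open>d\<mu>\<^sup>T/d\<nu>\<close>. Together with \<open>r \<phi>(1/r) = \<phi>(r)\<close> this
  makes \<open>\<phi>(r) d\<mu>/d\<nu>\<close> a \<open>T\<close>-invariant function, so the \<open>\<psi>\<close>-part of the kernel satisfies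
  \<open>\<integral> \<phi>(r) g (F \<circ> T) d\<mu> = \<integral> \<phi>(r) (g \<circ> T) F d\<mu>\<close> with \<open>F = f \<circ> \<xi>\<close>. The \<open>\<xi>\<close>-part needs
  only the \<open>\<xi>\<close>-invariance of \<open>\<mu>\<close>, and square integrability of \<open>f\<close>, \<open>g\<close> controls all
  the integrals because \<open>0 \<le> \<phi> \<le> 1\<close>.\<close>

lemma sets_add_measure [simp]: "sets (add_measure M N) = sets M"
  by (simp add: add_measure_def)

lemma space_add_measure [simp]: "space (add_measure M N) = space M"
  by (simp add: add_measure_def)

lemma emeasure_add_measure:
  assumes N: "sets N = sets M" and X: "X \<in> sets M"
  shows "emeasure (add_measure M N) X = emeasure M X + emeasure N X"
  unfolding add_measure_def
proof (rule emeasure_measure_of_sigma[OF sets.sigma_algebra_axioms _ _ X])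
  show "positive (sets M) (\<lambda>A. emeasure M A + emeasure N A)"
    by (simp add: positive_def)
  show "countably_additive (sets M) (\<lambda>A. emeasure M A + emeasure N A)"
  proof (rule countably_additiveI)
    fix A :: "nat \<Rightarrow> _"
    assume A: "range A \<subseteq> sets M" "disjoint_family A"
    then have "range A \<subseteq> sets N" using N by simp
    then show "(\<Sum>i. emeasure M (A i) + emeasure N (A i))
        = emeasure M (\<Union>i. A i) + emeasure N (\<Union>i. A i)"
      using suminf_emeasure[OF A] suminf_emeasure[of A N] A(2)
      by (simp add: suminf_add[symmetric])
  qed
qed

lemma absolutely_continuous_add_measure:
  assumes "sets N = sets M"
  shows "absolutely_continuous (add_measure M N) M" "absolutely_continuous (add_measure M N) N"
  using assms by (auto simp: absolutely_continuous_def null_sets_def emeasure_add_measure)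

lemma finite_measure_add_measure:
  assumes "finite_measure M" "finite_measure N" "sets N = sets M"
  shows "finite_measure (add_measure M N)"
proof (rule finite_measureI)
  have "space N = space M" using assms(3) by (rule sets_eq_imp_space_eq)
  then show "emeasure (add_measure M N) (space (add_measure M N)) \<noteq> \<infinity>"
    using assms by (simp add: emeasure_add_measure finite_measure.emeasure_finite)
qed

lemma distr_add_measure_distr_involution:
  assumes T: "T \<in> M \<rightarrow>\<^sub>M M" and inv: "\<And>z. z \<in> space M \<Longrightarrow> T (T z) = z"
  defines "\<nu> \<equiv> add_measure M (distr M M T)"
  shows "distr \<nu> \<nu> T = \<nu>"
proof (rule measure_eqI)
  fix X assume "X \<in> sets (distr \<nu> \<nu> T)"
  then have X: "X \<in> sets M" by (simp add: \<nu>_def)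
  have TX: "T -` X \<inter> space M \<in> sets M" using X T by measurable
  have TTX: "T -` (T -` X \<inter> space M) \<inter> space M = X"
  proof (intro set_eqI iffI)
    fix z assume "z \<in> T -` (T -` X \<inter> space M) \<inter> space M"
    then show "z \<in> X" using inv by auto
  next
    fix z assume z: "z \<in> X"
    then have "z \<in> space M" using sets.sets_into_space[OF X] by auto
    with z show "z \<in> T -` (T -` X \<inter> space M) \<inter> space M"
      using inv measurable_space[OF T] by auto
  qed
  have T\<nu>: "T \<in> \<nu> \<rightarrow>\<^sub>M \<nu>"
    using T by (subst measurable_cong_sets[of \<nu> M \<nu> M]) (simp_all add: \<nu>_def)
  have "emeasure (distr \<nu> \<nu> T) X = emeasure M (T -` X \<inter> space M) + emeasure M X"
    using X TX TTX T\<nu> T by (simp add: emeasure_distr \<nu>_def emeasure_add_measure)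
  also have "\<dots> = emeasure \<nu> X"
    using X T by (simp add: \<nu>_def emeasure_add_measure emeasure_distr add.commute)
  finally show "emeasure (distr \<nu> \<nu> T) X = emeasure \<nu> X" .
qed simp

lemma AE_RN_deriv_comp_involution:
  assumes "sigma_finite_measure V" and T: "T \<in> V \<rightarrow>\<^sub>M V"
    and inv: "\<And>z. z \<in> space V \<Longrightarrow> T (T z) = z" and V: "distr V V T = V"
    and N: "sets N = sets V" "absolutely_continuous V N" "absolutely_continuous V (distr N V T)"
  shows "AE z in V. RN_deriv V N (T z) = RN_deriv V (distr N V T) z"
proof -
  interpret V: sigma_finite_measure V by fact
  have "density V (RN_deriv V N \<circ> T) = distr (density V (RN_deriv V N)) V T"
    using distr_density_distr[OF T T, of "RN_deriv V N"] inv V by simp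
  also have "\<dots> = distr N V T"
    using N by (simp add: V.density_RN_deriv)
  also have "\<dots> = density V (RN_deriv V (distr N V T))"
    using N by (simp add: V.density_RN_deriv)
  finally show ?thesis
    using T by (intro V.density_unique) (auto simp: comp_def)
qed

lemma integral_density_measure_preserving:
  fixes b h h' :: "'a \<Rightarrow> real"
  assumes T[measurable]: "T \<in> V \<rightarrow>\<^sub>M V" and V: "distr V V T = V"
    and [measurable]: "b \<in> borel_measurable V" "h \<in> borel_measurable V" "h' \<in> borel_measurable V"
    and b_nonneg: "\<And>z. 0 \<le> b z"
    and swap: "AE z in V. b z * h z = b (T z) * h' (T z)"
  shows "integrable (density V b) h \<longleftrightarrow> integrable (density V b) h'"
    and "integral\<^sup>L (density V b) h = integral\<^sup>L (density V b) h'"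
proof -
  have bh'[measurable]: "(\<lambda>z. b z * h' z) \<in> borel_measurable V" by measurable
  have "integrable (density V b) h \<longleftrightarrow> integrable V (\<lambda>z. b z * h z)"
    using b_nonneg by (simp add: integrable_density)
  also have "\<dots> \<longleftrightarrow> integrable V (\<lambda>z. b (T z) * h' (T z))"
    using swap by (intro integrable_cong_AE) auto
  also have "\<dots> \<longleftrightarrow> integrable (distr V V T) (\<lambda>z. b z * h' z)"
    using T by (simp add: integrable_distr_eq)
  also have "\<dots> \<longleftrightarrow> integrable (density V b) h'"
    using b_nonneg by (simp add: V integrable_density)
  finally show "integrable (density V b) h \<longleftrightarrow> integrable (density V b) h'" .
  have "integral\<^sup>L (density V b) h = (\<integral>z. b z * h z \<partial>V)"
    using b_nonneg by (simp add: integral_density)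
  also have "\<dots> = (\<integral>z. b (T z) * h' (T z) \<partial>V)"
    using swap by (intro integral_cong_AE) auto
  also have "\<dots> = integral\<^sup>L (distr V V T) (\<lambda>z. b z * h' z)"
    using T by (simp add: integral_distr)
  also have "\<dots> = integral\<^sup>L (density V b) h'"
    using b_nonneg by (simp add: V integral_density)
  finally show "integral\<^sup>L (density V b) h = integral\<^sup>L (density V b) h'" .
qed

lemma abs_mult_le_sum_squares:
  fixes a b :: real
  shows "\<bar>a * b\<bar> \<le> a\<^sup>2 + b\<^sup>2"
proof -
  have "2 * \<bar>a\<bar> * \<bar>b\<bar> \<le> a\<^sup>2 + b\<^sup>2"
    using sum_squares_bound[of "\<bar>a\<bar>" "\<bar>b\<bar>"] by simp
  moreover have "0 \<le> \<bar>a\<bar> * \<bar>b\<bar>" by simp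
  ultimately show ?thesis unfolding abs_mult by linarith
qed

lemma integrable_weighted_product:
  fixes c x y :: "'a \<Rightarrow> real"
  assumes [measurable]: "c \<in> borel_measurable M" "x \<in> borel_measurable M" "y \<in> borel_measurable M"
    and c_nonneg: "\<And>z. 0 \<le> c z"
    and "integrable M (\<lambda>z. c z * (x z)\<^sup>2)" "integrable M (\<lambda>z. c z * (y z)\<^sup>2)"
  shows "integrable M (\<lambda>z. c z * x z * y z)"
proof (rule Bochner_Integration.integrable_bound)
  show "integrable M (\<lambda>z. c z * (x z)\<^sup>2 + c z * (y z)\<^sup>2)"
    using assms by simp
  have "norm (c z * x z * y z) \<le> norm (c z * (x z)\<^sup>2 + c z * (y z)\<^sup>2)" for z
  proof -
    have "c z * \<bar>x z * y z\<bar> \<le> c z * ((x z)\<^sup>2 + (y z)\<^sup>2)"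
      using abs_mult_le_sum_squares c_nonneg by (rule mult_left_mono)
    moreover have "0 \<le> c z * (x z)\<^sup>2 + c z * (y z)\<^sup>2"
      using c_nonneg by simp
    ultimately show ?thesis
      using c_nonneg by (simp add: abs_mult distrib_left mult.assoc)
  qed
  then show "AE z in M. norm (c z * x z * y z) \<le> norm (c z * (x z)\<^sup>2 + c z * (y z)\<^sup>2)"
    by simp
qed simp

lemma ratio_weight_symmetric:
  fixes \<phi> :: "real \<Rightarrow> real" and a b :: ennreal
  assumes inverse: "\<And>r. r > 0 \<Longrightarrow> r * \<phi> (1 / r) = \<phi> r" and zero: "\<phi> 0 = 0"
  shows "\<phi> (if a > 0 \<and> b > 0 then enn2real a / enn2real b else 0) * enn2real b
       = \<phi> (if b > 0 \<and> a > 0 then enn2real b / enn2real a else 0) * enn2real a"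
proof (cases "enn2real a > 0 \<and> enn2real b > 0")
  case True
  define s where "s = enn2real a / enn2real b"
  have "s > 0" using True by (simp add: s_def)
  have "a > 0" "b > 0" using True by (auto simp: enn2real_positive_iff)
  then have "\<phi> (if b > 0 \<and> a > 0 then enn2real b / enn2real a else 0) * enn2real a
      = s * \<phi> (1 / s) * enn2real b"
    using True by (simp add: s_def)
  also have "\<dots> = \<phi> s * enn2real b" using inverse[OF \<open>s > 0\<close>] by simp
  finally show ?thesis using \<open>a > 0\<close> \<open>b > 0\<close> by (simp add: s_def)
next
  case False
  then have "enn2real a = 0 \<or> enn2real b = 0" by (simp add: less_le)
  then show ?thesis by (auto simp: zero)
qed

lemma ratio_r_nonneg: "0 \<le> ratio_r M \<xi> \<psi> z"
  by (simp add: ratio_r_def Let_def)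

lemma integral_two_point_measure:
  fixes c :: real
  assumes c: "0 \<le> c" "c \<le> 1" and pq: "p \<in> space M" "q \<in> space M"
    and f: "f \<in> borel_measurable M"
  shows "(\<integral>y. f y \<partial>measure_of (space M) (sets M)
       (\<lambda>A. ennreal c * indicator A p + ennreal (1 - c) * indicator A q)) = c * f p + (1 - c) * f q"
proof -
  define w where "w = (\<lambda>b::bool. if b then c else 1 - c)"
  define W where "W = density (count_space UNIV) (\<lambda>b. ennreal (w b))"
  define h where "h = (\<lambda>b::bool. if b then p else q)"
  have hm: "h \<in> W \<rightarrow>\<^sub>M M"
    using pq by (auto simp: W_def h_def)
  have "measure_of (space M) (sets M)
       (\<lambda>A. ennreal c * indicator A p + ennreal (1 - c) * indicator A q) = distr W M h"
    unfolding distr_def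
  proof (rule measure_of_eq)
    show "sets M \<subseteq> Pow (space M)" by (rule sets.space_closed)
    fix A
    have "emeasure W (h -` A \<inter> space W) = (\<Sum>b\<in>UNIV. ennreal (w b) * indicator (h -` A) b)"
      by (simp add: W_def emeasure_density nn_integral_count_space_finite)
    also have "\<dots> = ennreal c * indicator A p + ennreal (1 - c) * indicator A q"
      by (simp add: UNIV_bool w_def h_def indicator_def add.commute)
    finally show "ennreal c * indicator A p + ennreal (1 - c) * indicator A q
        = emeasure W (h -` A \<inter> space W)" by simp
  qed
  also have "(\<integral>y. f y \<partial>distr W M h) = (\<integral>b. f (h b) \<partial>W)"
    by (rule integral_distr[OF hm f])
  also have "\<dots> = (\<integral>b. w b *\<^sub>R f (h b) \<partial>count_space UNIV)"
    unfolding W_def using c by (subst integral_density) (auto simp: w_def)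
  also have "\<dots> = c * f p + (1 - c) * f q"
    by (simp add: lebesgue_integral_count_space_finite UNIV_bool w_def h_def)
  finally show ?thesis .
qed

locale involutive_kernel = finite_measure M
  for M :: "'a measure" and \<xi> \<psi> :: "'a \<Rightarrow> 'a" and \<phi> :: "real \<Rightarrow> real" +
  assumes xi_measurable [measurable]: "\<xi> \<in> M \<rightarrow>\<^sub>M M"
    and xi_involution: "\<And>z. z \<in> space M \<Longrightarrow> \<xi> (\<xi> z) = z"
    and distr_xi: "distr M M \<xi> = M"
    and psi_measurable [measurable]: "\<psi> \<in> M \<rightarrow>\<^sub>M M"
    and xi_psi_involution: "\<And>z. z \<in> space M \<Longrightarrow> \<xi> (\<psi> (\<xi> (\<psi> z))) = z"
    and phi_measurable [measurable]: "\<phi> \<in> borel_measurable borel"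
    and phi_bounds: "\<And>r. 0 \<le> r \<Longrightarrow> 0 \<le> \<phi> r \<and> \<phi> r \<le> 1"
    and phi_inverse: "\<And>r. 0 < r \<Longrightarrow> r * \<phi> (1 / r) = \<phi> r"
    and phi_zero: "\<phi> 0 = 0"
begin

abbreviation T :: "'a \<Rightarrow> 'a" where "T \<equiv> \<xi> \<circ> \<psi>"

abbreviation \<nu> :: "'a measure" where "\<nu> \<equiv> add_measure M (distr M M T)"

abbreviation density_M :: "'a \<Rightarrow> real" where "density_M z \<equiv> enn2real (RN_deriv \<nu> M z)"

lemma T_measurable [measurable]: "T \<in> M \<rightarrow>\<^sub>M M"
  by measurable

lemma T_involution: "z \<in> space M \<Longrightarrow> T (T z) = z"
  by (simp add: xi_psi_involution)

lemma sets_nu [measurable_cong]: "sets \<nu> = sets M"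
  by simp

lemma finite_measure_nu: "finite_measure \<nu>"
  by (intro finite_measure_add_measure finite_measure_axioms finite_measure_distr) auto

lemma distr_nu: "distr \<nu> \<nu> T = \<nu>"
  using T_measurable T_involution by (rule distr_add_measure_distr_involution)

lemma AE_RN_deriv_swap:
  shows "AE z in \<nu>. RN_deriv \<nu> (distr M M T) (T z) = RN_deriv \<nu> M z"
    and "AE z in \<nu>. RN_deriv \<nu> M (T z) = RN_deriv \<nu> (distr M M T) z"
proof -
  have T\<nu>: "T \<in> \<nu> \<rightarrow>\<^sub>M \<nu>" by simp
  have sf: "sigma_finite_measure \<nu>"
    using finite_measure_nu by (rule finite_measure.sigma_finite_measure)
  have "distr (distr M M T) \<nu> T = distr M \<nu> (T \<circ> T)"
    by (rule distr_distr) auto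
  also have "\<dots> = distr M M (\<lambda>x. x)"
    by (rule distr_cong) (auto simp: xi_psi_involution)
  finally have distr_T: "distr M \<nu> T = distr M M T" "distr (distr M M T) \<nu> T = M"
    by (auto intro: distr_cong)
  note ac = absolutely_continuous_add_measure[of "distr M M T" M, simplified]
  show "AE z in \<nu>. RN_deriv \<nu> (distr M M T) (T z) = RN_deriv \<nu> M z"
    using AE_RN_deriv_comp_involution[OF sf T\<nu> _ distr_nu, of "distr M M T"] ac T_involution
    by (simp add: distr_T)
  show "AE z in \<nu>. RN_deriv \<nu> M (T z) = RN_deriv \<nu> (distr M M T) z"
    using AE_RN_deriv_comp_involution[OF sf T\<nu> _ distr_nu, of M] ac T_involution
    by (simp add: distr_T)
qed

lemma ratio_r_eq: "ratio_r M \<xi> \<psi> z =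
    (if RN_deriv \<nu> (distr M M T) z > 0 \<and> RN_deriv \<nu> M z > 0
     then enn2real (RN_deriv \<nu> (distr M M T) z) / density_M z else 0)"
  by (simp add: ratio_r_def Let_def)

lemma ratio_r_measurable [measurable]: "ratio_r M \<xi> \<psi> \<in> borel_measurable M"
  unfolding ratio_r_eq[abs_def] by measurable

lemma phi_ratio_bounds: "0 \<le> \<phi> (ratio_r M \<xi> \<psi> z)" "\<phi> (ratio_r M \<xi> \<psi> z) \<le> 1"
  using phi_bounds[OF ratio_r_nonneg[of M \<xi> \<psi> z]] by simp_all

lemma density_nu_density_M: "density \<nu> density_M = M"
proof -
  interpret \<nu>: finite_measure \<nu> by (rule finite_measure_nu)
  have "AE z in \<nu>. RN_deriv \<nu> M z \<noteq> \<infinity>"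
    using absolutely_continuous_add_measure[of "distr M M T" M]
    by (intro \<nu>.RN_deriv_finite) (auto intro: sigma_finite_measure)
  then have "density \<nu> density_M = density \<nu> (RN_deriv \<nu> M)"
    by (intro density_cong) (auto simp: ennreal_enn2real_if)
  also have "\<dots> = M"
    using absolutely_continuous_add_measure[of "distr M M T" M] by (simp add: \<nu>.density_RN_deriv)
  finally show ?thesis .
qed

lemma AE_weight_invariant:
  "AE z in \<nu>. \<phi> (ratio_r M \<xi> \<psi> z) * density_M z
     = \<phi> (ratio_r M \<xi> \<psi> (T z)) * density_M (T z)"
  using AE_RN_deriv_swap
proof eventually_elim
  case (elim z)
  then show ?case
    using ratio_weight_symmetric[OF phi_inverse phi_zero,
        of "RN_deriv \<nu> (distr M M T) z" "RN_deriv \<nu> M z"]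
    by (simp add: ratio_r_eq)
qed

lemma integral_phi_ratio_swap:
  fixes G K :: "'a \<Rightarrow> real"
  assumes [measurable]: "G \<in> borel_measurable M" "K \<in> borel_measurable M"
  shows "integrable M (\<lambda>z. \<phi> (ratio_r M \<xi> \<psi> z) * G z * K (T z))
     \<longleftrightarrow> integrable M (\<lambda>z. \<phi> (ratio_r M \<xi> \<psi> z) * G (T z) * K z)"
    and "(\<integral>z. \<phi> (ratio_r M \<xi> \<psi> z) * G z * K (T z) \<partial>M)
     = (\<integral>z. \<phi> (ratio_r M \<xi> \<psi> z) * G (T z) * K z \<partial>M)"
proof -
  have "AE z in \<nu>. density_M z * (\<phi> (ratio_r M \<xi> \<psi> z) * G z * K (T z))
      = density_M (T z) * (\<phi> (ratio_r M \<xi> \<psi> (T z)) * G (T (T z)) * K (T z))"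
    using AE_weight_invariant AE_space
  proof eventually_elim
    case (elim z)
    have "T (T z) = z" using elim(2) by (simp add: xi_psi_involution)
    then show ?case using elim(1) by (metis mult.assoc mult.commute)
  qed
  note swap = integral_density_measure_preserving[OF _ distr_nu _ _ _ _ this, unfolded density_nu_density_M]
  show "integrable M (\<lambda>z. \<phi> (ratio_r M \<xi> \<psi> z) * G z * K (T z))
     \<longleftrightarrow> integrable M (\<lambda>z. \<phi> (ratio_r M \<xi> \<psi> z) * G (T z) * K z)"
    by (rule swap(1)) auto
  show "(\<integral>z. \<phi> (ratio_r M \<xi> \<psi> z) * G z * K (T z) \<partial>M)
     = (\<integral>z. \<phi> (ratio_r M \<xi> \<psi> z) * G (T z) * K z \<partial>M)"
    by (rule swap(2)) auto
qed

lemma kernel_op_mix_kernel: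
  assumes "h \<in> borel_measurable M" and "z \<in> space M"
  shows "kernel_op (mix_kernel M \<phi> \<xi> \<psi>) h z
    = \<phi> (ratio_r M \<xi> \<psi> z) * h (\<psi> z) + (1 - \<phi> (ratio_r M \<xi> \<psi> z)) * h (\<xi> z)"
  unfolding kernel_op_def mix_kernel_def
  using assms phi_ratio_bounds measurable_space[OF xi_measurable] measurable_space[OF psi_measurable]
  by (intro integral_two_point_measure) auto

lemma kernel_op_mix_kernel_measurable:
  assumes [measurable]: "h \<in> borel_measurable M"
  shows "kernel_op (mix_kernel M \<phi> \<xi> \<psi>) h \<in> borel_measurable M"
proof (subst measurable_cong)
  show "kernel_op (mix_kernel M \<phi> \<xi> \<psi>) h z
      = \<phi> (ratio_r M \<xi> \<psi> z) * h (\<psi> z) + (1 - \<phi> (ratio_r M \<xi> \<psi> z)) * h (\<xi> z)"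
    if "z \<in> space M" for z
    using that by (simp add: kernel_op_mix_kernel)
qed measurable

lemma inner_L2_kernel_op_left:
  assumes [measurable]: "f \<in> borel_measurable M" "g \<in> borel_measurable M"
  shows "inner_L2 M (kernel_op (mix_kernel M \<phi> \<xi> \<psi>) f) g
    = (\<integral>z. \<phi> (ratio_r M \<xi> \<psi> z) * g z * f (\<xi> (T z))
          + (1 - \<phi> (ratio_r M \<xi> \<psi> z)) * f (\<xi> z) * g z \<partial>M)"
  unfolding inner_L2_def
  by (intro Bochner_Integration.integral_cong)
    (auto simp: kernel_op_mix_kernel xi_involution measurable_space[OF psi_measurable] algebra_simps)

lemma inner_L2_kernel_op_right:
  assumes [measurable]: "f \<in> borel_measurable M" "g \<in> borel_measurable M"
  shows "inner_L2 M f (kernel_op (mix_kernel M \<phi> \<xi> \<psi>) (g \<circ> \<xi>) \<circ> \<xi>)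
    = (\<integral>z. \<phi> (ratio_r M \<xi> \<psi> z) * g (T z) * f (\<xi> z)
          + (1 - \<phi> (ratio_r M \<xi> \<psi> z)) * f (\<xi> z) * g z \<partial>M)"
proof -
  have [measurable]: "kernel_op (mix_kernel M \<phi> \<xi> \<psi>) (g \<circ> \<xi>) \<in> borel_measurable M"
    by (rule kernel_op_mix_kernel_measurable) measurable
  have "inner_L2 M f (kernel_op (mix_kernel M \<phi> \<xi> \<psi>) (g \<circ> \<xi>) \<circ> \<xi>)
      = (\<integral>x. f x * kernel_op (mix_kernel M \<phi> \<xi> \<psi>) (g \<circ> \<xi>) (\<xi> x) \<partial>distr M M \<xi>)"
    by (simp add: inner_L2_def distr_xi)
  also have "\<dots> = (\<integral>z. f (\<xi> z) * kernel_op (mix_kernel M \<phi> \<xi> \<psi>) (g \<circ> \<xi>) (\<xi> (\<xi> z)) \<partial>M)"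
    by (rule integral_distr) measurable
  also have "\<dots> = (\<integral>z. \<phi> (ratio_r M \<xi> \<psi> z) * g (T z) * f (\<xi> z)
          + (1 - \<phi> (ratio_r M \<xi> \<psi> z)) * f (\<xi> z) * g z \<partial>M)"
    by (intro Bochner_Integration.integral_cong)
      (auto simp: kernel_op_mix_kernel xi_involution measurable_space[OF xi_measurable] algebra_simps)
  finally show ?thesis .
qed

lemma L2_comp_xi: "L2 M f \<Longrightarrow> L2 M (\<lambda>z. f (\<xi> z))"
  using integrable_distr_eq[OF xi_measurable, of "\<lambda>x. (f x)\<^sup>2"]
  by (auto simp: L2_def distr_xi)

lemma reversible_mix_kernel: "reversible M (\<lambda>f. f \<circ> \<xi>) (mix_kernel M \<phi> \<xi> \<psi>)"
  unfolding reversible_def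
proof (intro allI impI)
  fix f g assume f: "L2 M f" and g: "L2 M g"
  define F where "F z = f (\<xi> z)" for z
  let ?c = "\<lambda>z. \<phi> (ratio_r M \<xi> \<psi> z)"
  have F: "L2 M F" unfolding F_def using f by (rule L2_comp_xi)
  have [measurable]: "f \<in> borel_measurable M" "g \<in> borel_measurable M" "F \<in> borel_measurable M"
    using f g F by (simp_all add: L2_def)
  have weighted_square: "integrable M (\<lambda>z. ?c z * (h z)\<^sup>2)" "integrable M (\<lambda>z. (1 - ?c z) * (h z)\<^sup>2)"
    if "L2 M h" for h
    using that phi_ratio_bounds
    by (auto simp: L2_def intro!: Bochner_Integration.integrable_bound[of M "\<lambda>z. (h z)\<^sup>2"]
        AE_I2 mult_left_le_one_le)
  have "integrable M (\<lambda>z. ?c z * 1 * (F (T z))\<^sup>2)"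
    using integral_phi_ratio_swap(1)[of "\<lambda>_. 1" "\<lambda>z. (F z)\<^sup>2"] weighted_square[OF F] by simp
  then have psi_part: "integrable M (\<lambda>z. ?c z * g z * F (T z))"
    using phi_ratio_bounds weighted_square[OF g] by (intro integrable_weighted_product) auto
  have psi_part_swapped: "integrable M (\<lambda>z. ?c z * g (T z) * F z)"
    using psi_part integral_phi_ratio_swap(1)[of g F] by simp
  have xi_part: "integrable M (\<lambda>z. (1 - ?c z) * F z * g z)"
    using phi_ratio_bounds weighted_square[OF F] weighted_square[OF g]
    by (intro integrable_weighted_product) auto
  have "inner_L2 M (kernel_op (mix_kernel M \<phi> \<xi> \<psi>) f) g
      = (\<integral>z. ?c z * g z * F (T z) + (1 - ?c z) * F z * g z \<partial>M)"
    unfolding F_def by (rule inner_L2_kernel_op_left) simp_all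
  also have "\<dots> = (\<integral>z. ?c z * g z * F (T z) \<partial>M) + (\<integral>z. (1 - ?c z) * F z * g z \<partial>M)"
    using psi_part xi_part by (rule Bochner_Integration.integral_add)
  also have "\<dots> = (\<integral>z. ?c z * g (T z) * F z \<partial>M) + (\<integral>z. (1 - ?c z) * F z * g z \<partial>M)"
    using integral_phi_ratio_swap(2)[of g F] by simp
  also have "\<dots> = (\<integral>z. ?c z * g (T z) * F z + (1 - ?c z) * F z * g z \<partial>M)"
    using psi_part_swapped xi_part by (rule Bochner_Integration.integral_add[symmetric])
  also have "\<dots> = inner_L2 M f (kernel_op (mix_kernel M \<phi> \<xi> \<psi>) (g \<circ> \<xi>) \<circ> \<xi>)"
    unfolding F_def by (rule inner_L2_kernel_op_right[symmetric]) simp_all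
  finally show "inner_L2 M (kernel_op (mix_kernel M \<phi> \<xi> \<psi>) f) g
      = inner_L2 M f ((\<lambda>f. f \<circ> \<xi>) (kernel_op (mix_kernel M \<phi> \<xi> \<psi>) ((\<lambda>f. f \<circ> \<xi>) g)))"
    by simp
qed

end

theorem proposition3p5:
  fixes M :: "'a measure" and \<xi> \<psi> :: "'a \<Rightarrow> 'a" and \<phi> :: "real \<Rightarrow> real"
  assumes "prob_space M"
    and "\<xi> \<in> M \<rightarrow>\<^sub>M M" and "\<And>z. z \<in> space M \<Longrightarrow> \<xi> (\<xi> z) = z"
    and "distr M M \<xi> = M"
    and "\<psi> \<in> M \<rightarrow>\<^sub>M M" and "bij_betw \<psi> (space M) (space M)"
    and "\<And>z. z \<in> space M \<Longrightarrow> \<psi> (\<xi> (\<psi> (\<xi> z))) = z"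
    and "\<And>z. z \<in> space M \<Longrightarrow> \<xi> (\<psi> (\<xi> (\<psi> z))) = z"
    and "\<phi> \<in> borel_measurable borel"
    and "\<And>r. r \<ge> 0 \<Longrightarrow> 0 \<le> \<phi> r \<and> \<phi> r \<le> 1"
    and "\<And>r. r > 0 \<Longrightarrow> r * \<phi> (1 / r) = \<phi> r"
    and "\<phi> 0 = 0"
  shows "reversible M (\<lambda>f. f \<circ> \<xi>) (mix_kernel M \<phi> \<xi> \<psi>)"
proof -
  interpret prob_space M by fact
  interpret involutive_kernel M \<xi> \<psi> \<phi>
    using assms by unfold_locales auto
  show ?thesis by (rule reversible_mix_kernel)
qed

end
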